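(* Fix an integer horizon $T\ge 1$, constants $r_f>0$, $a\in\mathbb{R}$, $\sigma>0$, a temperature $\lambda>0$, a target $b\in\mathbb{R}$ and a Lagrange multiplier $w\in\mathbb{R}$. Consider the discrete-time exploratory mean–variance problem with wealth dynamics $x_{t+1}^{\pi}=r_f x_t^{\pi}+r_t u_t^{\pi}$, $t=0,\dots,T-1$, and optimal value function $$J^*(t,x;w)=\min_{\pi_t,\dots,\pi_{T-1}}\mathbb{E}\Big[(x_T^{\pi}-w)^2+\lambda\sum_{s=t}^{T-1}\int_{\mathbb{R}}\pi_s(u)\ln\pi_s(u)\,du\ \Big|\ x_t^{\pi}=x\Big]-(w-b)^2,$$ with $J^*(T,x;w)=(x-w)^2-(w-b)^2$. Then for every $t\in\{0,1,\dots,T\}$ and $x\in\mathbb{R}$, $$J^*(t,x;w)=\Big(\frac{\sigma^2 r_f^2}{a^2+\sigma^2}\Big)^{T-t}(x-\rho_t w)^2+\frac{\lambda}{2}(T-t)\ln\Big(\frac{a^2+\sigma^2}{\pi\lambda}\Big)+\frac{\lambda}{2}\sum_{i=t+1}^{T}(T-i)\ln\Big(\frac{\sigma^2 r_f^2}{a^2+\sigma^2}\Big)-(w-b)^2,$$ where $\rho_t=(r_f^{-1})^{T-t}$. Moreover, for $t\in\{0,\dots,T-1\}$ the optimal feedback control is Gaussian, with density $$\pi^*(u;t,x,w)=\mathcal{N}\Big(u\ \Big|\ -\frac{a r_f(x-\rho_t w)}{a^2+\sigma^2},\ \frac{\lambda}{2(a^2+\sigma^2)}\Big(\frac{a^2+\sigma^2}{\sigma^2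 r_f^2}\Big)^{T-t-1}\Big).$$
   Context: Market: one risk-free asset with (gross) return rate $r_f$ per period and one risky asset whose excess return from period $t$ to $t+1$ is a random variable $r_t$; the $r_t$, $t=0,\dots,T-1$, are statistically independent, each with mean $a$ and variance $\sigma^2$ (no other distributional assumption). A (distributional, feedback) control policy is a sequence $\pi=(\pi_0,\dots,\pi_{T-1})$ where each $\pi_t=\pi_t(\cdot;t,x,w)$ is a probability density on $\mathbb{R}$ depending on the current time and wealth; at time $t$ the amount $u_t^{\pi}$ invested in the risky asset is drawn from $\pi_t(\cdot;t,x_t^{\pi},w)$, and $r_t$ is independent of $u_t^{\pi}$ and of the history up to time $t$. Thus $\mathbb{E}_t[r_tu_t^{\pi}]=a\int u\,\pi_t(u)\,du$ and $\mathbb{E}_t[(r_tu_t^{\pi})^2]=(a^2+\sigma^2)\int u^2\pi_t(u)\,du$. The term $\lambda\sum_t\int\pi_t\ln\pi_t$ is the entropy regularization (negative accumulated entropy) weighted by $\lambda$. $\mathcal{N}(u\mid m,v)$ denotes the Gaussian density in $u$ with mean $m$ and variance $v$. The symbol $\pi$ without subscript inside the logarithm denotes the number $3.14159\ldots$. *)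

theory Defs
  imports "HOL-Probability.Probability"
begin

text \<open>Law of the (control, excess return) pair at time s: the control u has density
  pol s x, the excess return r has distribution R s, independent.\<close>
definition step_measure :: "(nat \<Rightarrow> real measure) \<Rightarrow> (nat \<Rightarrow> real \<Rightarrow> real \<Rightarrow> real)
    \<Rightarrow> nat \<Rightarrow> real \<Rightarrow> (real \<times> real) measure" where
  "step_measure R pol s x = density lborel (\<lambda>u. ennreal (pol s x u)) \<Otimes>\<^sub>M R s"

text \<open>Regularized cost-to-go of the feedback policy pol with k periods remaining
  (i.e. at time T - k): (x_T - w)^2 plus lambda times the accumulated negative entropy,
  in conditional expectation given current wealth x.\<close>
primrec ctg :: "real \<Rightarrow> (nat \<Rightarrow> real measure) \<Rightarrow> real \<Rightarrow> real \<Rightarrow> nat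
    \<Rightarrow> (nat \<Rightarrow> real \<Rightarrow> real \<Rightarrow> real) \<Rightarrow> nat \<Rightarrow> real \<Rightarrow> real" where
  "ctg rf R lam w T pol 0 x = (x - w)\<^sup>2"
| "ctg rf R lam w T pol (Suc k) x =
     (\<integral>p. ctg rf R lam w T pol k (rf * x + snd p * fst p) \<partial>(step_measure R pol (T - Suc k) x))
     + lam * (\<integral>u. pol (T - Suc k) x u * ln (pol (T - Suc k) x u) \<partial>lborel)"

definition admissible :: "real \<Rightarrow> (nat \<Rightarrow> real measure) \<Rightarrow> real \<Rightarrow> real \<Rightarrow> nat
    \<Rightarrow> (nat \<Rightarrow> real \<Rightarrow> real \<Rightarrow> real) \<Rightarrow> nat \<Rightarrow> bool" where
  "admissible rf R lam w T pol t \<longleftrightarrow>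
    (\<forall>s x. t \<le> s \<and> s < T \<longrightarrow>
       pol s x \<in> borel_measurable borel
     \<and> (\<forall>u. 0 \<le> pol s x u)
     \<and> integrable lborel (pol s x)
     \<and> (\<integral>u. pol s x u \<partial>lborel) = 1
     \<and> integrable lborel (\<lambda>u. u\<^sup>2 * pol s x u)
     \<and> integrable lborel (\<lambda>u. pol s x u * ln (pol s x u))
     \<and> integrable (step_measure R pol s x)
          (\<lambda>p. ctg rf R lam w T pol (T - Suc s) (rf * x + snd p * fst p)))"

definition J_opt :: "real \<Rightarrow> (nat \<Rightarrow> real measure) \<Rightarrow> real \<Rightarrow> real \<Rightarrow> real \<Rightarrow> nat
    \<Rightarrow> nat \<Rightarrow> real \<Rightarrow> real" where
  "J_opt rf R lam w b T t x =
     Inf {ctg rf R lam w T pol (T - t) x - (w - b)\<^sup>2 | pol. admissible rf R lam w T pol t}"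

text \<open>N(u | m, v) with v the variance.\<close>
definition gauss :: "real \<Rightarrow> real \<Rightarrow> real \<Rightarrow> real" where
  "gauss m v u = normal_density m (sqrt v) u"

end

theory Submission
  imports Defs
begin

text \<open>Dynamic programming with a quadratic ansatz. Let
  \<open>V\<^sub>k(x) = q\<^sup>k (x - r\<^sub>f\<^sup>-\<^sup>k w)\<^sup>2 + C\<^sub>k\<close>, with \<open>q = \<sigma>\<^sup>2 r\<^sub>f\<^sup>2 / (a\<^sup>2 + \<sigma>\<^sup>2)\<close>,
  be the candidate value with \<open>k\<close> periods left. For a control density \<open>p\<close> with finite second
  moment, \<open>E[V\<^sub>k(r\<^sub>f x + r u)]\<close> depends on \<open>p\<close> only through its first two moments, and
  completing the square in \<open>u\<close> rewrites \<open>E[V\<^sub>k(r\<^sub>f x + r u)] + \<lambda> \<integral> p ln p\<close>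
  as \<open>V\<^sub>k\<^sub>+\<^sub>1(x) + \<lambda> \<integral> p ln (p / g)\<close> for an explicit Gaussian \<open>g\<close>.
  By Gibbs' inequality the last term is nonnegative and vanishes for \<open>p = g\<close>, so induction
  on \<open>k\<close> shows that \<open>V\<^sub>k\<close> bounds the cost-to-go of every admissible policy from below
  and is attained by the Gaussian policy.\<close>

lemma
  fixes f g :: "_ \<Rightarrow> real"
  assumes "sigma_finite_measure M" "sigma_finite_measure N" "integrable M f" "integrable N g"
  shows integrable_pair_measure_mult: "integrable (M \<Otimes>\<^sub>M N) (\<lambda>z. f (fst z) * g (snd z))"
    and integral_pair_measure_mult:
      "(\<integral>z. f (fst z) * g (snd z) \<partial>(M \<Otimes>\<^sub>M N)) = (\<integral>x. f x \<partial>M) * (\<integral>y. g y \<partial>N)"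
proof -
  interpret pair_sigma_finite M N using assms by (simp add: pair_sigma_finite_def)
  have [measurable]: "f \<in> borel_measurable M" "g \<in> borel_measurable N"
    using assms by auto
  show int: "integrable (M \<Otimes>\<^sub>M N) (\<lambda>z. f (fst z) * g (snd z))"
  proof (rule Fubini_integrable)
    show "(\<lambda>z. f (fst z) * g (snd z)) \<in> borel_measurable (M \<Otimes>\<^sub>M N)" by measurable
    have "(\<lambda>x. \<integral>y. norm (f (fst (x, y)) * g (snd (x, y))) \<partial>N) =
        (\<lambda>x. norm (f x) * (\<integral>y. norm (g y) \<partial>N))"
      by (simp add: abs_mult)
    then show "integrable M (\<lambda>x. \<integral>y. norm (f (fst (x, y)) * g (snd (x, y))) \<partial>N)"
      using assms(3) by simp
    show "AE x in M. integrable N (\<lambda>y. f (fst (x, y)) * g (snd (x, y)))"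
      using assms(4) by simp
  qed
  show "(\<integral>z. f (fst z) * g (snd z) \<partial>(M \<Otimes>\<^sub>M N)) = (\<integral>x. f x \<partial>M) * (\<integral>y. g y \<partial>N)"
    using integral_fst'[OF int] by simp
qed

lemma
  fixes y :: real
  assumes M: "prob_space M" "integrable M (\<lambda>u. u)" "integrable M (\<lambda>u. u\<^sup>2)"
    and N: "prob_space N" "integrable N (\<lambda>r. r)" "integrable N (\<lambda>r. r\<^sup>2)"
  shows integrable_pair_affine_sq: "integrable (M \<Otimes>\<^sub>M N) (\<lambda>z. (y + snd z * fst z)\<^sup>2)"
    and integral_pair_affine_sq: "(\<integral>z. (y + snd z * fst z)\<^sup>2 \<partial>(M \<Otimes>\<^sub>M N)) =
      y\<^sup>2 + 2 * y * (\<integral>u. u \<partial>M) * (\<integral>r. r \<partial>N) + (\<integral>u. u\<^sup>2 \<partial>M) * (\<integral>r. r\<^sup>2 \<partial>N)"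
proof -
  interpret M1: prob_space M by (rule M(1))
  interpret M2: prob_space N by (rule N(1))
  interpret pair_prob_space M N ..
  note mult = integrable_pair_measure_mult integral_pair_measure_mult
  note sf = M1.sigma_finite_measure_axioms M2.sigma_finite_measure_axioms
  note first = mult[OF sf M(2) N(2)] and second = mult[OF sf M(3) N(3)]
  have expand: "(\<lambda>z. (y + snd z * fst z)\<^sup>2) =
      (\<lambda>z. y\<^sup>2 + 2 * y * (fst z * snd z) + (fst z)\<^sup>2 * (snd z)\<^sup>2)"
    by (simp add: power2_eq_square algebra_simps)
  show "integrable (M \<Otimes>\<^sub>M N) (\<lambda>z. (y + snd z * fst z)\<^sup>2)"
    unfolding expand using first(1) second(1) by simp
  show "(\<integral>z. (y + snd z * fst z)\<^sup>2 \<partial>(M \<Otimes>\<^sub>M N)) =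
      y\<^sup>2 + 2 * y * (\<integral>u. u \<partial>M) * (\<integral>r. r \<partial>N) + (\<integral>u. u\<^sup>2 \<partial>M) * (\<integral>r. r\<^sup>2 \<partial>N)"
    unfolding expand using first second by (simp add: prob_space)
qed

definition prob_density_L2 :: "(real \<Rightarrow> real) \<Rightarrow> bool" where
  "prob_density_L2 p \<longleftrightarrow> p \<in> borel_measurable borel \<and> (\<forall>u. 0 \<le> p u) \<and> integrable lborel p
      \<and> (\<integral>u. p u \<partial>lborel) = 1 \<and> integrable lborel (\<lambda>u. u\<^sup>2 * p u)"

lemma prob_density_L2_integrable_first_moment:
  assumes "prob_density_L2 p"
  shows "integrable lborel (\<lambda>u. p u * u)"
proof -
  have [measurable]: "p \<in> borel_measurable borel" using assms by (simp add: prob_density_L2_def)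
  have "integrable lborel (\<lambda>u. p u + u\<^sup>2 * p u)"
    using assms by (simp add: prob_density_L2_def)
  then show ?thesis
  proof (rule Bochner_Integration.integrable_bound)
    show "AE u in lborel. norm (p u * u) \<le> norm (p u + u\<^sup>2 * p u)"
    proof (rule AE_I2)
      fix u
      have p: "0 \<le> p u" using assms by (simp add: prob_density_L2_def)
      have "0 \<le> (\<bar>u\<bar> - 1)\<^sup>2" by simp
      then have "\<bar>u\<bar> \<le> 1 + u\<^sup>2" by (simp add: power2_eq_square algebra_simps abs_mult_self_eq)
      then have "p u * \<bar>u\<bar> \<le> p u * (1 + u\<^sup>2)" using p by (rule mult_left_mono)
      then show "norm (p u * u) \<le> norm (p u + u\<^sup>2 * p u)"
        using p by (simp add: abs_mult algebra_simps)
    qed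
  qed simp
qed

lemma prob_space_density_L2:
  assumes "prob_density_L2 p"
  shows "prob_space (density lborel (\<lambda>u. ennreal (p u)))"
  by standard
    (use assms in \<open>simp add: prob_density_L2_def emeasure_density nn_integral_eq_integral\<close>)

lemma
  fixes y :: real
  assumes p: "prob_density_L2 p"
    and N: "prob_space N" "integrable N (\<lambda>r. r)" "integrable N (\<lambda>r. r\<^sup>2)"
  shows integrable_density_pair_affine_sq:
      "integrable (density lborel (\<lambda>u. ennreal (p u)) \<Otimes>\<^sub>M N) (\<lambda>z. (y + snd z * fst z)\<^sup>2)"
    and integral_density_pair_affine_sq:
      "(\<integral>z. (y + snd z * fst z)\<^sup>2 \<partial>(density lborel (\<lambda>u. ennreal (p u)) \<Otimes>\<^sub>M N)) =
        y\<^sup>2 + 2 * y * (\<integral>u. p u * u \<partial>lborel) * (\<integral>r. r \<partial>N)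
        + (\<integral>u. u\<^sup>2 * p u \<partial>lborel) * (\<integral>r. r\<^sup>2 \<partial>N)"
proof -
  have [measurable]: "p \<in> borel_measurable borel" and nonneg: "\<And>u. 0 \<le> p u"
    and sq: "integrable lborel (\<lambda>u. u\<^sup>2 * p u)"
    using p by (auto simp: prob_density_L2_def)
  note first = prob_density_L2_integrable_first_moment[OF p]
  have M: "integrable (density lborel (\<lambda>u. ennreal (p u))) (\<lambda>u. u)"
      "integrable (density lborel (\<lambda>u. ennreal (p u))) (\<lambda>u. u\<^sup>2)"
    using first sq nonneg by (subst integrable_density; simp add: mult.commute)+
  have "(\<integral>u. u \<partial>density lborel (\<lambda>u. ennreal (p u))) = (\<integral>u. p u * u \<partial>lborel)"
      "(\<integral>u. u\<^sup>2 \<partial>density lborel (\<lambda>u. ennreal (p u))) = (\<integral>u. u\<^sup>2 * p u \<partial>lborel)"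
    using nonneg by (subst integral_density; simp add: mult.commute)+
  then show "(\<integral>z. (y + snd z * fst z)\<^sup>2 \<partial>(density lborel (\<lambda>u. ennreal (p u)) \<Otimes>\<^sub>M N)) =
        y\<^sup>2 + 2 * y * (\<integral>u. p u * u \<partial>lborel) * (\<integral>r. r \<partial>N)
        + (\<integral>u. u\<^sup>2 * p u \<partial>lborel) * (\<integral>r. r\<^sup>2 \<partial>N)"
    using integral_pair_affine_sq[OF prob_space_density_L2[OF p] M N] by simp
  show "integrable (density lborel (\<lambda>u. ennreal (p u)) \<Otimes>\<^sub>M N) (\<lambda>z. (y + snd z * fst z)\<^sup>2)"
    using integrable_pair_affine_sq[OF prob_space_density_L2[OF p] M N] .
qed

lemma gibbs_inequality:
  fixes p g :: "'a \<Rightarrow> real"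
  assumes p: "\<And>u. 0 \<le> p u" "integrable M p" "(\<integral>u. p u \<partial>M) = 1"
    and g: "\<And>u. 0 < g u" "integrable M g" "(\<integral>u. g u \<partial>M) = 1"
    and "integrable M (\<lambda>u. p u * ln (p u))" "integrable M (\<lambda>u. p u * ln (g u))"
  shows "(\<integral>u. p u * ln (g u) \<partial>M) \<le> (\<integral>u. p u * ln (p u) \<partial>M)"
proof -
  have pointwise: "p u * ln (g u) - p u * ln (p u) \<le> g u - p u" for u
  proof (cases "p u = 0")
    case False
    then have "p u > 0" using p(1)[of u] by simp
    then have "p u * ln (g u) - p u * ln (p u) = p u * ln (g u / p u)"
      using g(1)[of u] by (simp add: ln_div right_diff_distrib)
    also have "\<dots> \<le> p u * (g u / p u - 1)"
      using ln_le_minus_one[of "g u / p u"] \<open>p u > 0\<close> g(1)[of u] by (intro mult_left_mono) auto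
    also have "\<dots> = g u - p u" using \<open>p u > 0\<close> by (simp add: field_simps)
    finally show ?thesis .
  qed (use g(1)[of u] in simp)
  have "(\<integral>u. p u * ln (g u) - p u * ln (p u) \<partial>M) \<le> (\<integral>u. g u - p u \<partial>M)"
    using assms pointwise by (intro integral_mono) auto
  also have "\<dots> = 0" using p g by simp
  finally show ?thesis using assms by simp
qed

lemma gauss_pos: "v > 0 \<Longrightarrow> 0 < gauss m v u"
  by (simp add: gauss_def normal_density_pos)

lemma ln_gauss:
  assumes "v > 0"
  shows "ln (gauss m v u) = - ln (2 * pi * v) / 2 - (u - m)\<^sup>2 / (2 * v)"
proof -
  have "gauss m v u = 1 / sqrt (2 * pi * v) * exp (- (u - m)\<^sup>2 / (2 * v))"
    using assms by (simp add: gauss_def normal_density_def)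
  also have "ln \<dots> = - ln (sqrt (2 * pi * v)) - (u - m)\<^sup>2 / (2 * v)"
    using assms by (simp add: ln_mult ln_div)
  also have "\<dots> = - ln (2 * pi * v) / 2 - (u - m)\<^sup>2 / (2 * v)"
    using assms by (simp add: ln_sqrt)
  finally show ?thesis .
qed

lemma
  assumes p: "prob_density_L2 p" and v: "v > 0"
  shows integrable_mult_ln_gauss: "integrable lborel (\<lambda>u. p u * ln (gauss m v u))"
    and integral_mult_ln_gauss: "(\<integral>u. p u * ln (gauss m v u) \<partial>lborel) =
      - ln (2 * pi * v) / 2
      - ((\<integral>u. u\<^sup>2 * p u \<partial>lborel) - 2 * m * (\<integral>u. p u * u \<partial>lborel) + m\<^sup>2) / (2 * v)"
proof -
  have int: "integrable lborel p" "integrable lborel (\<lambda>u. u\<^sup>2 * p u)"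
      "integrable lborel (\<lambda>u. p u * u)" and total: "(\<integral>u. p u \<partial>lborel) = 1"
    using p prob_density_L2_integrable_first_moment[OF p] by (auto simp: prob_density_L2_def)
  define c where "c = - ln (2 * pi * v) / 2 - m\<^sup>2 / (2 * v)"
  have expand: "(\<lambda>u. p u * ln (gauss m v u)) =
      (\<lambda>u. c * p u + m / v * (p u * u) - 1 / (2 * v) * (u\<^sup>2 * p u))"
    using v by (simp add: ln_gauss c_def fun_eq_iff field_simps power2_eq_square)
  show "integrable lborel (\<lambda>u. p u * ln (gauss m v u))"
    unfolding expand using int by simp
  show "(\<integral>u. p u * ln (gauss m v u) \<partial>lborel) =
      - ln (2 * pi * v) / 2
      - ((\<integral>u. u\<^sup>2 * p u \<partial>lborel) - 2 * m * (\<integral>u. p u * u \<partial>lborel) + m\<^sup>2) / (2 * v)"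
  proof -
    define M\<^sub>1 where "M\<^sub>1 = (\<integral>u. p u * u \<partial>lborel)"
    define M\<^sub>2 where "M\<^sub>2 = (\<integral>u. u\<^sup>2 * p u \<partial>lborel)"
    have "(\<integral>u. p u * ln (gauss m v u) \<partial>lborel) = c + m / v * M\<^sub>1 - 1 / (2 * v) * M\<^sub>2"
      unfolding expand M\<^sub>1_def M\<^sub>2_def using int total by simp
    also have "\<dots> = - ln (2 * pi * v) / 2 - (M\<^sub>2 - 2 * m * M\<^sub>1 + m\<^sup>2) / (2 * v)"
      using v by (simp add: c_def field_simps)
    finally show ?thesis by (simp add: M\<^sub>1_def M\<^sub>2_def)
  qed
qed

lemma prob_density_L2_gauss:
  assumes "v > 0"
  shows "prob_density_L2 (gauss m v)"
proof -
  have sd: "sqrt v > 0" and eq: "gauss m v = normal_density m (sqrt v)"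
    using assms by (simp_all add: gauss_def fun_eq_iff)
  have "(\<lambda>u. u\<^sup>2 * gauss m v u) =
      (\<lambda>u. gauss m v u * (u - m) ^ 2 + 2 * m * (gauss m v u * u) - m\<^sup>2 * gauss m v u)"
    by (simp add: fun_eq_iff power2_eq_square algebra_simps)
  moreover have "integrable lborel
      (\<lambda>u. gauss m v u * (u - m) ^ 2 + 2 * m * (gauss m v u * u) - m\<^sup>2 * gauss m v u)"
    unfolding eq
    using integrable_normal_moment[OF sd, of m 2] integrable_normal_moment_nz_1[OF sd, of m]
      integrable_normal_density[OF sd, of m]
    by (intro Bochner_Integration.integrable_diff Bochner_Integration.integrable_add
        integrable_mult_right) auto
  ultimately have "integrable lborel (\<lambda>u. u\<^sup>2 * gauss m v u)"
    by simp
  then show ?thesis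
    unfolding prob_density_L2_def eq
    by (simp add: integrable_normal_density[OF sd] integral_normal_density[OF sd])
qed

lemma admissible_iff:
  "admissible rf R lam w T pol t \<longleftrightarrow>
    (\<forall>s x. t \<le> s \<and> s < T \<longrightarrow>
       prob_density_L2 (pol s x)
     \<and> integrable lborel (\<lambda>u. pol s x u * ln (pol s x u))
     \<and> integrable (step_measure R pol s x)
          (\<lambda>p. ctg rf R lam w T pol (T - Suc s) (rf * x + snd p * fst p)))"
  unfolding admissible_def prob_density_L2_def by meson

locale exploratory_mean_variance =
  fixes T :: nat and rf a \<sigma> lam w :: real and R :: "nat \<Rightarrow> real measure"
  assumes rf_pos: "rf > 0" and sigma_pos: "\<sigma> > 0" and lam_pos: "lam > 0"
    and returns: "\<And>t. t < T \<Longrightarrow> prob_space (R t) \<and> sets (R t) = sets borel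
            \<and> integrable (R t) (\<lambda>r. r) \<and> integrable (R t) (\<lambda>r. r\<^sup>2)
            \<and> (\<integral>r. r \<partial>R t) = a \<and> (\<integral>r. (r - a)\<^sup>2 \<partial>R t) = \<sigma>\<^sup>2"
begin

definition m2 :: real where "m2 = a\<^sup>2 + \<sigma>\<^sup>2"

definition q :: real where "q = \<sigma>\<^sup>2 * rf\<^sup>2 / m2"

definition V_const :: "nat \<Rightarrow> real" where
  "V_const k = lam / 2 * real k * ln (m2 / (pi * lam)) + lam / 2 * (\<Sum>j<k. real j * ln q)"

definition V :: "nat \<Rightarrow> real \<Rightarrow> real" where
  "V k x = q ^ k * (x - (1 / rf) ^ k * w)\<^sup>2 + V_const k"

definition opt_mean :: "nat \<Rightarrow> real \<Rightarrow> real" where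
  "opt_mean k x = - (a * rf * (x - (1 / rf) ^ Suc k * w)) / m2"

definition opt_var :: "nat \<Rightarrow> real" where
  "opt_var k = lam / (2 * m2) * (m2 / (\<sigma>\<^sup>2 * rf\<^sup>2)) ^ k"

definition opt_policy :: "nat \<Rightarrow> real \<Rightarrow> real \<Rightarrow> real" where
  "opt_policy s x = gauss (- (a * rf * (x - (1 / rf) ^ (T - s) * w)) / m2)
                          (lam / (2 * m2) * (m2 / (\<sigma>\<^sup>2 * rf\<^sup>2)) ^ (T - s - 1))"

lemma m2_pos: "m2 > 0"
  using sigma_pos by (simp add: m2_def add_nonneg_pos)

lemma q_pos: "q > 0"
  using sigma_pos rf_pos m2_pos by (simp add: q_def)

lemma opt_var_pos: "opt_var k > 0"
  using sigma_pos rf_pos m2_pos lam_pos by (simp add: opt_var_def)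

lemma opt_policy_eq:
  "s < T \<Longrightarrow> opt_policy s x = gauss (opt_mean (T - Suc s) x) (opt_var (T - Suc s))"
  by (simp add: opt_policy_def opt_mean_def opt_var_def Suc_diff_Suc)

lemma integral_return_sq: "t < T \<Longrightarrow> (\<integral>r. r\<^sup>2 \<partial>R t) = m2"
  using returns prob_space.variance_eq[of "R t" "\<lambda>r. r"] by (simp add: m2_def)

lemma prob_space_step_measure:
  assumes "s < T" and "prob_density_L2 (pol s x)"
  shows "prob_space (step_measure R pol s x)"
proof -
  interpret P: prob_space "density lborel (\<lambda>u. ennreal (pol s x u))"
    using prob_space_density_L2 assms(2) .
  interpret Q: prob_space "R s" using returns assms(1) by simp
  interpret PQ: pair_prob_space "density lborel (\<lambda>u. ennreal (pol s x u))" "R s" ..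
  show ?thesis unfolding step_measure_def by (rule PQ.prob_space_axioms)
qed

lemma lam_div_opt_var: "lam / (2 * opt_var k) = m2 * q ^ k"
  using sigma_pos rf_pos m2_pos lam_pos by (simp add: opt_var_def q_def field_simps power_divide)

lemma ln_opt_var: "- ln (2 * pi * opt_var k) / 2 = ln (m2 / (pi * lam)) / 2 + real k * ln q / 2"
proof -
  have "2 * pi * opt_var k = pi * lam / (m2 * q ^ k)"
    using lam_div_opt_var[of k] opt_var_pos[of k] m2_pos q_pos by (simp add: field_simps)
  then show ?thesis
    using m2_pos q_pos lam_pos by (simp add: ln_div ln_mult ln_realpow)
qed

lemma V_const_Suc:
  "V_const (Suc k) = V_const k + lam / 2 * ln (m2 / (pi * lam)) + lam / 2 * real k * ln q"
  by (simp add: V_const_def algebra_simps)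

text \<open>Completing the square in the control: \<open>M\<^sub>1\<close>, \<open>M\<^sub>2\<close> stand for the first two moments of
  the control density.\<close>
lemma bellman_algebra:
  fixes M\<^sub>1 M\<^sub>2 x :: real and k :: nat
  defines "y \<equiv> rf * x - (1 / rf) ^ k * w"
  shows "q ^ k * (y\<^sup>2 + 2 * y * M\<^sub>1 * a + M\<^sub>2 * m2) + V_const k
     + lam * (- ln (2 * pi * opt_var k) / 2
              - (M\<^sub>2 - 2 * opt_mean k x * M\<^sub>1 + (opt_mean k x)\<^sup>2) / (2 * opt_var k))
     = V (Suc k) x"
proof -
  have mean: "opt_mean k x = - a * y / m2"
    using rf_pos m2_pos by (simp add: opt_mean_def y_def field_simps)
  have shift: "x - (1 / rf) ^ Suc k * w = y / rf"
    using rf_pos by (simp add: y_def field_simps)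
  have quadratic: "Q * (y\<^sup>2 + 2 * y * M\<^sub>1 * a + M\<^sub>2 * m2)
      - m2 * Q * (M\<^sub>2 - 2 * (- a * y / m2) * M\<^sub>1 + (- a * y / m2)\<^sup>2) = q * Q * (y / rf)\<^sup>2" for Q
  proof -
    have sigma_sq: "\<sigma>\<^sup>2 = m2 - a\<^sup>2" by (simp add: m2_def)
    show ?thesis
      using m2_pos rf_pos unfolding q_def sigma_sq by (simp add: field_simps power2_eq_square)
  qed
  have "lam * (- ln (2 * pi * opt_var k) / 2
              - (M\<^sub>2 - 2 * opt_mean k x * M\<^sub>1 + (opt_mean k x)\<^sup>2) / (2 * opt_var k))
      = lam / 2 * ln (m2 / (pi * lam)) + lam / 2 * real k * ln q
        - lam / (2 * opt_var k) * (M\<^sub>2 - 2 * opt_mean k x * M\<^sub>1 + (opt_mean k x)\<^sup>2)"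
    using opt_var_pos[of k] unfolding ln_opt_var by (simp add: field_simps)
  then show ?thesis
    using quadratic[of "q ^ k"] unfolding V_def V_const_Suc lam_div_opt_var mean shift
    by (simp add: algebra_simps)
qed

text \<open>Adding \<open>lam * \<integral> p ln p\<close> to both sides exhibits the one-step cost of a control density \<open>p\<close>
  as \<open>V (Suc k) x\<close> plus \<open>lam\<close> times the Kullback-Leibler divergence of \<open>p\<close> from the Gaussian.\<close>
lemma
  assumes "s < T" and p: "prob_density_L2 (pol s x)"
  shows integrable_V_step_measure:
      "integrable (step_measure R pol s x) (\<lambda>z. V k (rf * x + snd z * fst z))"
    and bellman_identity:
      "(\<integral>z. V k (rf * x + snd z * fst z) \<partial>step_measure R pol s x)
       + lam * (\<integral>u. pol s x u * ln (gauss (opt_mean k x) (opt_var k) u) \<partial>lborel) = V (Suc k) x"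
proof -
  define y where "y = rf * x - (1 / rf) ^ k * w"
  define M\<^sub>1 where "M\<^sub>1 = (\<integral>u. pol s x u * u \<partial>lborel)"
  define M\<^sub>2 where "M\<^sub>2 = (\<integral>u. u\<^sup>2 * pol s x u \<partial>lborel)"
  interpret prob_space "step_measure R pol s x"
    using prob_space_step_measure[of s pol x, OF assms] .
  have V_shift: "(\<lambda>z. V k (rf * x + snd z * fst z)) =
      (\<lambda>z. q ^ k * (y + snd z * fst z)\<^sup>2 + V_const k)"
    by (simp add: fun_eq_iff V_def y_def algebra_simps)
  have R: "prob_space (R s)" "integrable (R s) (\<lambda>r. r)" "integrable (R s) (\<lambda>r. r\<^sup>2)"
      "(\<integral>r. r \<partial>R s) = a" "(\<integral>r. r\<^sup>2 \<partial>R s) = m2"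
    using returns[OF \<open>s < T\<close>] integral_return_sq[OF \<open>s < T\<close>] by auto
  have sq_int: "integrable (step_measure R pol s x) (\<lambda>z. (y + snd z * fst z)\<^sup>2)"
    unfolding step_measure_def by (rule integrable_density_pair_affine_sq[OF p R(1-3)])
  have sq_eq: "(\<integral>z. (y + snd z * fst z)\<^sup>2 \<partial>step_measure R pol s x) =
      y\<^sup>2 + 2 * y * M\<^sub>1 * a + M\<^sub>2 * m2"
    unfolding step_measure_def integral_density_pair_affine_sq[OF p R(1-3)] R(4,5)
      M\<^sub>1_def M\<^sub>2_def ..
  show "integrable (step_measure R pol s x) (\<lambda>z. V k (rf * x + snd z * fst z))"
    unfolding V_shift using sq_int by simp
  have "(\<integral>z. V k (rf * x + snd z * fst z) \<partial>step_measure R pol s x) =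
      q ^ k * (y\<^sup>2 + 2 * y * M\<^sub>1 * a + M\<^sub>2 * m2) + V_const k"
    unfolding V_shift sq_eq[symmetric] using sq_int by (simp add: prob_space)
  then show "(\<integral>z. V k (rf * x + snd z * fst z) \<partial>step_measure R pol s x)
       + lam * (\<integral>u. pol s x u * ln (gauss (opt_mean k x) (opt_var k) u) \<partial>lborel) = V (Suc k) x"
    using bellman_algebra[where M\<^sub>1 = M\<^sub>1 and M\<^sub>2 = M\<^sub>2 and x = x and k = k]
    unfolding integral_mult_ln_gauss[OF p opt_var_pos] M\<^sub>1_def[symmetric] M\<^sub>2_def[symmetric]
    by (simp add: y_def)
qed

lemma V_le_ctg:
  assumes adm: "admissible rf R lam w T pol t"
  shows "k \<le> T - t \<Longrightarrow> V k x \<le> ctg rf R lam w T pol k x"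
proof (induction k arbitrary: x)
  case 0
  then show ?case by (simp add: V_def V_const_def)
next
  case (Suc k)
  define s where "s = T - Suc k"
  define g where "g = gauss (opt_mean k x) (opt_var k)"
  have "s < T" "t \<le> s" "T - Suc s = k" using Suc.prems by (auto simp: s_def)
  then have p: "prob_density_L2 (pol s x)"
    and entropy: "integrable lborel (\<lambda>u. pol s x u * ln (pol s x u))"
    and ctg_int: "integrable (step_measure R pol s x)
        (\<lambda>z. ctg rf R lam w T pol k (rf * x + snd z * fst z))"
    using adm unfolding admissible_iff by auto
  have "(\<integral>z. V k (rf * x + snd z * fst z) \<partial>step_measure R pol s x)
      \<le> (\<integral>z. ctg rf R lam w T pol k (rf * x + snd z * fst z) \<partial>step_measure R pol s x)"
    using Suc.IH Suc.prems integrable_V_step_measure[of s pol x, OF \<open>s < T\<close> p] ctg_int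
    by (intro integral_mono) auto
  moreover have "(\<integral>u. pol s x u * ln (g u) \<partial>lborel) \<le> (\<integral>u. pol s x u * ln (pol s x u) \<partial>lborel)"
    using p prob_density_L2_gauss[OF opt_var_pos] entropy gauss_pos[OF opt_var_pos]
      integrable_mult_ln_gauss[OF p opt_var_pos]
    unfolding g_def prob_density_L2_def by (intro gibbs_inequality) auto
  ultimately have "V (Suc k) x \<le>
      (\<integral>z. ctg rf R lam w T pol k (rf * x + snd z * fst z) \<partial>step_measure R pol s x)
      + lam * (\<integral>u. pol s x u * ln (pol s x u) \<partial>lborel)"
    unfolding bellman_identity[of s pol x k, OF \<open>s < T\<close> p, symmetric] g_def
    using lam_pos by (intro add_mono mult_left_mono) auto
  then show ?case by (simp add: s_def)
qed

lemma ctg_opt_policy: "k \<le> T \<Longrightarrow> ctg rf R lam w T opt_policy k x = V k x"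
proof (induction k arbitrary: x)
  case 0
  then show ?case by (simp add: V_def V_const_def)
next
  case (Suc k)
  define s where "s = T - Suc k"
  have "s < T" "T - Suc s = k" using Suc.prems by (auto simp: s_def)
  then have opt: "opt_policy s x = gauss (opt_mean k x) (opt_var k)"
    by (simp add: opt_policy_eq)
  then have p: "prob_density_L2 (opt_policy s x)"
    by (simp add: prob_density_L2_gauss opt_var_pos)
  show ?case
    using Suc bellman_identity[of s opt_policy x k, OF \<open>s < T\<close> p]
    by (simp add: opt s_def[symmetric])
qed

lemma admissible_opt_policy: "admissible rf R lam w T opt_policy t"
  unfolding admissible_iff
proof (intro allI impI conjI)
  fix s x assume "t \<le> s \<and> s < T"
  then have "s < T" by simp
  have opt: "opt_policy s x = gauss (opt_mean (T - Suc s) x) (opt_var (T - Suc s))"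
    using \<open>s < T\<close> by (rule opt_policy_eq)
  show p: "prob_density_L2 (opt_policy s x)"
    unfolding opt by (rule prob_density_L2_gauss[OF opt_var_pos])
  show "integrable lborel (\<lambda>u. opt_policy s x u * ln (opt_policy s x u))"
    unfolding opt by (rule integrable_mult_ln_gauss[OF prob_density_L2_gauss] opt_var_pos)+
  show "integrable (step_measure R opt_policy s x)
      (\<lambda>z. ctg rf R lam w T opt_policy (T - Suc s) (rf * x + snd z * fst z))"
    using integrable_V_step_measure[of s opt_policy x, OF \<open>s < T\<close> p] ctg_opt_policy[of "T - Suc s"]
    by simp
qed

lemma J_opt_eq_V: "t \<le> T \<Longrightarrow> J_opt rf R lam w b T t x = V (T - t) x - (w - b)\<^sup>2"
  unfolding J_opt_def
proof (rule cInf_eq_minimum)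
  show "V (T - t) x - (w - b)\<^sup>2
      \<in> {ctg rf R lam w T pol (T - t) x - (w - b)\<^sup>2 |pol. admissible rf R lam w T pol t}"
    using admissible_opt_policy ctg_opt_policy[of "T - t" x] by force
qed (use V_le_ctg in force)

end

theorem theorem1:
  fixes T :: nat and rf a \<sigma> lam b w :: real and R :: "nat \<Rightarrow> real measure"
  assumes "T \<ge> 1" and "rf > 0" and "\<sigma> > 0" and "lam > 0"
    and "\<And>t. t < T \<Longrightarrow> prob_space (R t) \<and> sets (R t) = sets borel
            \<and> integrable (R t) (\<lambda>r. r) \<and> integrable (R t) (\<lambda>r. r\<^sup>2)
            \<and> (\<integral>r. r \<partial>R t) = a \<and> (\<integral>r. (r - a)\<^sup>2 \<partial>R t) = \<sigma>\<^sup>2"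
  shows "(\<forall>t x. t \<le> T \<longrightarrow>
           J_opt rf R lam w b T t x =
             (\<sigma>\<^sup>2 * rf\<^sup>2 / (a\<^sup>2 + \<sigma>\<^sup>2)) ^ (T - t) * (x - (1 / rf) ^ (T - t) * w)\<^sup>2
             + lam / 2 * real (T - t) * ln ((a\<^sup>2 + \<sigma>\<^sup>2) / (pi * lam))
             + lam / 2 * (\<Sum>i = t + 1..T. real (T - i) * ln (\<sigma>\<^sup>2 * rf\<^sup>2 / (a\<^sup>2 + \<sigma>\<^sup>2)))
             - (w - b)\<^sup>2)
       \<and> (let pstar = (\<lambda>s x u. gauss (- (a * rf * (x - (1 / rf) ^ (T - s) * w)) / (a\<^sup>2 + \<sigma>\<^sup>2))
                          (lam / (2 * (a\<^sup>2 + \<sigma>\<^sup>2)) * ((a\<^sup>2 + \<sigma>\<^sup>2) / (\<sigma>\<^sup>2 * rf\<^sup>2)) ^ (T - s - 1)) u)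
          in \<forall>t. t < T \<longrightarrow> admissible rf R lam w T pstar t
               \<and> (\<forall>x. ctg rf R lam w T pstar (T - t) x - (w - b)\<^sup>2 = J_opt rf R lam w b T t x))"
proof -
  interpret exploratory_mean_variance T rf a \<sigma> lam w R
    by unfold_locales (use assms in auto)
  have pstar: "(\<lambda>s x u. gauss (- (a * rf * (x - (1 / rf) ^ (T - s) * w)) / (a\<^sup>2 + \<sigma>\<^sup>2))
      (lam / (2 * (a\<^sup>2 + \<sigma>\<^sup>2)) * ((a\<^sup>2 + \<sigma>\<^sup>2) / (\<sigma>\<^sup>2 * rf\<^sup>2)) ^ (T - s - 1)) u) = opt_policy"
    by (simp add: fun_eq_iff opt_policy_def m2_def)
  have reindex: "(\<Sum>i = t + 1..T. f (T - i)) = (\<Sum>j<T - t. f j)"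
    if "t \<le> T" for t and f :: "nat \<Rightarrow> real"
    by (rule sum.reindex_bij_witness[of _ "\<lambda>j. T - j" "\<lambda>i. T - i"]) (use that in auto)
  have "V (T - t) x =
      (\<sigma>\<^sup>2 * rf\<^sup>2 / (a\<^sup>2 + \<sigma>\<^sup>2)) ^ (T - t) * (x - (1 / rf) ^ (T - t) * w)\<^sup>2
      + lam / 2 * real (T - t) * ln ((a\<^sup>2 + \<sigma>\<^sup>2) / (pi * lam))
      + lam / 2 * (\<Sum>i = t + 1..T. real (T - i) * ln (\<sigma>\<^sup>2 * rf\<^sup>2 / (a\<^sup>2 + \<sigma>\<^sup>2)))"
    if "t \<le> T" for t x
    using reindex[OF that, of "\<lambda>j. real j * ln q"] by (simp add: V_def V_const_def q_def m2_def)
  then show ?thesis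
    unfolding pstar Let_def
    using J_opt_eq_V admissible_opt_policy ctg_opt_policy by simp
qed

end
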